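(* Let $S$ be a numerical semigroup. The following conditions are equivalent. (1) $S$ is a MANS-semigroup with $\mathrm{e}(S)=3$. (2) $S=\langle m,\ am+1,\ bm+t\rangle$, where $m,a,b,t\in\mathbb{N}$, $m\geq 3$, $a\geq 1$, $t\in\{2,\ldots,m-1\}$, and $(t-1)(am+1)<bm+t<t(am+1)$.
   Context: $\mathbb{N}=\{0,1,2,\ldots\}$. A numerical semigroup is a subset $S\subseteq\mathbb{N}$ closed under addition, containing $0$, with $\mathbb{N}\setminus S$ finite. For $A\subseteq\mathbb{N}$ nonempty, $\langle A\rangle$ is the submonoid of $(\mathbb{N},+)$ generated by $A$. Every numerical semigroup $S$ has a unique minimal system of generators $\mathrm{msg}(S)$ (finite), and $\mathrm{e}(S)=|\mathrm{msg}(S)|$ is its embedding dimension. The multiplicity $\mathrm{m}(S)$ is the least element of $S\setminus\{0\}$. For $n\in S\setminus\{0\}$, the Apéry set is $\mathrm{Ap}(S,n)=\{s\in S: s-n\notin S\}=\{w(0)=0,w(1),\ldots,w(n-1)\}$, where $w(i)$ is the least element of $S$ congruent to $i$ modulo $n$. $S$ is a MANS-semigroup (numerical semigroup with monotone Apéry set) if $w(1)<w(2)<\cdots<w(\mathrm{m}(S)-1)$, where $w(i)$ is the least element of $S$ congruent to $i$ modulo $\mathrm{m}(S)$. *)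

theory Defs
  imports Main
begin

definition numerical_semigroup :: "nat set \<Rightarrow> bool" where
  "numerical_semigroup S \<longleftrightarrow> 0 \<in> S \<and> (\<forall>x\<in>S. \<forall>y\<in>S. x + y \<in> S) \<and> finite (UNIV - S)"

inductive_set gen :: "nat set \<Rightarrow> nat set" for A :: "nat set" where
  gen_zero: "0 \<in> gen A"
| gen_add: "a \<in> A \<Longrightarrow> x \<in> gen A \<Longrightarrow> a + x \<in> gen A"

definition msg :: "nat set \<Rightarrow> nat set" where
  "msg S = (THE A. A \<subseteq> S \<and> gen A = S \<and> (\<forall>B. B \<subset> A \<longrightarrow> gen B \<noteq> S))"

definition embedding_dimension :: "nat set \<Rightarrow> nat" where
  "embedding_dimension S = card (msg S)"

definition multiplicity :: "nat set \<Rightarrow> nat" where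
  "multiplicity S = (LEAST x. x \<in> S \<and> x \<noteq> 0)"

definition apery_w :: "nat set \<Rightarrow> nat \<Rightarrow> nat \<Rightarrow> nat" where
  "apery_w S n i = (LEAST s. s \<in> S \<and> s mod n = i mod n)"

definition MANS :: "nat set \<Rightarrow> bool" where
  "MANS S \<longleftrightarrow> (\<forall>i j. 1 \<le> i \<and> i < j \<and> j \<le> multiplicity S - 1 \<longrightarrow>
      apery_w S (multiplicity S) i < apery_w S (multiplicity S) j)"

end

theory Submission
  imports Defs
begin

text \<open>
  Let \<open>S = <m, u, v>\<close> with \<open>u = a m + 1\<close> and \<open>v = b m + t\<close>. An element \<open>x m + y u + z v\<close>
  has residue \<open>y + z t\<close> modulo \<open>m\<close>, and the inequalities \<open>(t - 1) u < v < t u\<close> make \<open>v\<close> cheaper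
  than \<open>t\<close> copies of \<open>u\<close> but dearer than \<open>t - 1\<close> of them. Hence the least element of residue
  \<open>i < m\<close> is \<open>w(i) = (i div t) v + (i mod t) u\<close>, which is strictly increasing in \<open>i\<close>; and \<open>m\<close>,
  \<open>u\<close>, \<open>v\<close> are irreducible.

  Conversely, in a MANS semigroup \<open>w(1)\<close> is the least nonzero element of \<open>Ap(S, m)\<close>, and since
  summands of Apery elements are Apery elements, \<open>w(1)\<close> is irreducible. With embedding dimension
  three the minimal generators are thus \<open>m\<close>, \<open>u = w(1)\<close> and some \<open>v = w(t)\<close>. Monotonicity gives
  \<open>w(t - 1) < v\<close>, and \<open>w(t - 1)\<close>, being below \<open>v\<close>, uses at least \<open>t - 1\<close> copies of \<open>u\<close>; on the
  other side \<open>t u\<close> has residue \<open>t\<close>, so \<open>v \<le> t u\<close>, with equality excluded by irreducibility.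
\<close>

section \<open>Generated submonoids and irreducible elements\<close>

lemma gen_base: "a \<in> A \<Longrightarrow> a \<in> gen A"
  using gen_add[of a A 0] gen_zero by simp

lemma gen_add_closed: "x \<in> gen A \<Longrightarrow> y \<in> gen A \<Longrightarrow> x + y \<in> gen A"
  by (induction x rule: gen.induct) (auto simp: add.assoc intro: gen_add)

lemma gen_mult_closed: "x \<in> gen A \<Longrightarrow> k * x \<in> gen A"
  by (induction k) (auto intro: gen_zero gen_add_closed)

lemma gen_least:
  assumes "A \<subseteq> S" "0 \<in> S" "\<forall>x\<in>S. \<forall>y\<in>S. x + y \<in> S"
  shows "gen A \<subseteq> S"
proof
  fix x assume "x \<in> gen A"
  then show "x \<in> S" using assms by (induction x rule: gen.induct) auto
qed

lemma gen_nonzero_split: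
  "x \<in> gen A \<Longrightarrow> x \<noteq> 0 \<Longrightarrow> \<exists>a\<in>A. a \<noteq> 0 \<and> a \<le> x \<and> x - a \<in> gen A"
proof (induction x rule: gen.induct)
  case (gen_add a x)
  show ?case
  proof (cases "a = 0")
    case True
    then show ?thesis using gen_add by auto
  next
    case False
    then show ?thesis using gen_add.hyps by (intro bexI[of _ a]) auto
  qed
qed simp

lemma mem_gen_three: "s \<in> gen {p, q, r} \<longleftrightarrow> (\<exists>x y z. s = x * p + y * q + z * r)"
proof
  assume "s \<in> gen {p, q, r}"
  then show "\<exists>x y z. s = x * p + y * q + z * r"
  proof (induction s rule: gen.induct)
    case gen_zero
    show ?case by (rule exI[of _ 0]) simp
  next
    case (gen_add a s)
    then obtain x y z where s: "s = x * p + y * q + z * r" by blast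
    from gen_add.hyps(1) consider "a = p" | "a = q" | "a = r" by blast
    then show ?case
    proof cases
      case 1
      then have "a + s = Suc x * p + y * q + z * r" using s by simp
      then show ?thesis by blast
    next
      case 2
      then have "a + s = x * p + Suc y * q + z * r" using s by simp
      then show ?thesis by blast
    next
      case 3
      then have "a + s = x * p + y * q + Suc z * r" using s by simp
      then show ?thesis by blast
    qed
  qed
next
  assume "\<exists>x y z. s = x * p + y * q + z * r"
  moreover have "p \<in> gen {p, q, r}" "q \<in> gen {p, q, r}" "r \<in> gen {p, q, r}"
    by (auto intro: gen_base)
  ultimately show "s \<in> gen {p, q, r}"
    by (auto intro!: gen_add_closed gen_mult_closed)
qed

definition irreducibles :: "nat set \<Rightarrow> nat set" where
  "irreducibles S = {x \<in> S. x \<noteq> 0 \<and> (\<forall>p\<in>S. \<forall>q\<in>S. x = p + q \<longrightarrow> p = 0 \<or> q = 0)}"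

lemma irreducibles_subset: "irreducibles S \<subseteq> S"
  by (auto simp: irreducibles_def)

lemma gen_irreducibles:
  assumes "0 \<in> S" "\<forall>x\<in>S. \<forall>y\<in>S. x + y \<in> S"
  shows "gen (irreducibles S) = S"
proof
  show "gen (irreducibles S) \<subseteq> S"
    by (rule gen_least[OF irreducibles_subset assms])
next
  have "x \<in> S \<Longrightarrow> x \<in> gen (irreducibles S)" for x
  proof (induction x rule: less_induct)
    case (less x)
    show ?case
    proof (cases "x = 0 \<or> x \<in> irreducibles S")
      case True
      then show ?thesis using gen_zero gen_base by auto
    next
      case False
      then obtain p q where "p \<in> S" "q \<in> S" "x = p + q" "p \<noteq> 0" "q \<noteq> 0"
        using less.prems by (auto simp: irreducibles_def)
      then show ?thesis using less.IH gen_add_closed by auto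
    qed
  qed
  then show "S \<subseteq> gen (irreducibles S)" by blast
qed

lemma irreducibles_subset_generators:
  assumes "gen A = S"
  shows "irreducibles S \<subseteq> A"
proof
  fix x assume x: "x \<in> irreducibles S"
  then obtain a where a: "a \<in> A" "a \<noteq> 0" "a \<le> x" "x - a \<in> S"
    using gen_nonzero_split[of x A] assms by (auto simp: irreducibles_def)
  moreover have "a \<in> S" using a(1) gen_base assms by blast
  moreover have "x = a + (x - a)" using a(3) by simp
  ultimately have "x - a = 0" using x a(2) unfolding irreducibles_def by blast
  then show "x \<in> A" using a by simp
qed

lemma msg_eq_irreducibles:
  assumes "0 \<in> S" "\<forall>x\<in>S. \<forall>y\<in>S. x + y \<in> S"
  shows "msg S = irreducibles S"
  unfolding msg_def
proof (rule the_equality)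
  have "gen B \<noteq> S" if "B \<subset> irreducibles S" for B
    using that irreducibles_subset_generators[of B S] by blast
  then show "irreducibles S \<subseteq> S \<and> gen (irreducibles S) = S \<and>
      (\<forall>B. B \<subset> irreducibles S \<longrightarrow> gen B \<noteq> S)"
    using irreducibles_subset gen_irreducibles[OF assms] by blast
next
  fix A assume A: "A \<subseteq> S \<and> gen A = S \<and> (\<forall>B. B \<subset> A \<longrightarrow> gen B \<noteq> S)"
  then have "irreducibles S \<subseteq> A" using irreducibles_subset_generators by blast
  moreover have "\<not> irreducibles S \<subset> A" using A gen_irreducibles[OF assms] by blast
  ultimately show "A = irreducibles S" by blast
qed

section \<open>Multiplicity and Apery sets\<close>

lemma numerical_semigroup_zero: "numerical_semigroup S \<Longrightarrow> 0 \<in> S"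
  by (simp add: numerical_semigroup_def)

lemma numerical_semigroup_add:
  "numerical_semigroup S \<Longrightarrow> x \<in> S \<Longrightarrow> y \<in> S \<Longrightarrow> x + y \<in> S"
  by (simp add: numerical_semigroup_def)

lemma numerical_semigroup_mult: "numerical_semigroup S \<Longrightarrow> s \<in> S \<Longrightarrow> k * s \<in> S"
  by (induction k) (simp_all add: numerical_semigroup_zero numerical_semigroup_add)

lemma numerical_semigroup_cofinite:
  assumes "numerical_semigroup S"
  obtains N where "\<And>n. N \<le> n \<Longrightarrow> n \<in> S"
proof -
  obtain N where "\<forall>n\<in>UNIV - S. n < N"
    using assms finite_nat_set_iff_bounded by (auto simp: numerical_semigroup_def)
  then have "\<And>n. N \<le> n \<Longrightarrow> n \<in> S" by (meson DiffI UNIV_I not_less)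
  then show thesis by (rule that)
qed

lemma multiplicity_le: "s \<in> S \<Longrightarrow> s \<noteq> 0 \<Longrightarrow> multiplicity S \<le> s"
  unfolding multiplicity_def by (rule Least_le) simp

lemma multiplicity_in_nonzero:
  assumes "numerical_semigroup S"
  shows "multiplicity S \<in> S" "multiplicity S \<noteq> 0"
proof -
  obtain N where "\<And>n. N \<le> n \<Longrightarrow> n \<in> S"
    using numerical_semigroup_cofinite[OF assms] by blast
  then have "Suc N \<in> S \<and> Suc N \<noteq> 0" by simp
  then have "multiplicity S \<in> S \<and> multiplicity S \<noteq> 0"
    unfolding multiplicity_def by (rule LeastI)
  then show "multiplicity S \<in> S" "multiplicity S \<noteq> 0" by simp_all
qed

lemma multiplicity_eqI:
  "m \<in> S \<Longrightarrow> m \<noteq> 0 \<Longrightarrow> (\<And>s. s \<in> S \<Longrightarrow> s \<noteq> 0 \<Longrightarrow> m \<le> s) \<Longrightarrow> multiplicity S = m"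
  unfolding multiplicity_def by (rule Least_equality) auto

lemma multiplicity_irreducible:
  assumes "numerical_semigroup S"
  shows "multiplicity S \<in> irreducibles S"
proof -
  have "p = 0 \<or> q = 0" if "p \<in> S" "q \<in> S" "multiplicity S = p + q" for p q
    using that multiplicity_le[of p S] multiplicity_le[of q S] multiplicity_in_nonzero(2)[OF assms]
    by linarith
  then show ?thesis
    using multiplicity_in_nonzero[OF assms] by (auto simp: irreducibles_def)
qed

text \<open>The Apery set \<open>Ap(S, n) = {s \<in> S. s - n \<notin> S}\<close>, phrased without truncated subtraction.\<close>
definition apery_set :: "nat set \<Rightarrow> nat \<Rightarrow> nat set" where
  "apery_set S n = {s \<in> S. \<forall>x\<in>S. s \<noteq> x + n}"

lemma apery_w_le: "s \<in> S \<Longrightarrow> s mod n = i mod n \<Longrightarrow> apery_w S n i \<le> s"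
  unfolding apery_w_def by (rule Least_le) simp

lemma apery_w_in:
  assumes "numerical_semigroup S" "0 < n"
  shows "apery_w S n i \<in> S" "apery_w S n i mod n = i mod n"
proof -
  obtain N where N: "\<And>k. N \<le> k \<Longrightarrow> k \<in> S"
    using numerical_semigroup_cofinite[OF assms(1)] by blast
  have "N \<le> N * n + i mod n" using assms(2) by (simp add: trans_le_add1)
  then have "N * n + i mod n \<in> S \<and> (N * n + i mod n) mod n = i mod n" using N by simp
  then have "apery_w S n i \<in> S \<and> apery_w S n i mod n = i mod n"
    unfolding apery_w_def by (rule LeastI)
  then show "apery_w S n i \<in> S" "apery_w S n i mod n = i mod n" by simp_all
qed

lemma apery_w_in_apery_set:
  assumes "numerical_semigroup S" "0 < n"
  shows "apery_w S n i \<in> apery_set S n"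
proof -
  have "apery_w S n i \<noteq> x + n" if "x \<in> S" for x
  proof
    assume eq: "apery_w S n i = x + n"
    then have "x mod n = i mod n" using apery_w_in(2)[OF assms, of i] by simp
    then have "apery_w S n i \<le> x" by (rule apery_w_le[OF \<open>x \<in> S\<close>])
    then show False using eq assms(2) by simp
  qed
  then show ?thesis using apery_w_in(1)[OF assms] by (simp add: apery_set_def)
qed

lemma apery_w_mod_eq:
  assumes "numerical_semigroup S" "n \<in> S" "0 < n" and s: "s \<in> apery_set S n"
  shows "apery_w S n (s mod n) = s"
proof -
  define w where "w = apery_w S n (s mod n)"
  have "w \<le> s" using s apery_w_le[of s S n "s mod n"] by (simp add: w_def apery_set_def)
  moreover have "s mod n = w mod n" using apery_w_in(2)[OF assms(1,3)] by (simp add: w_def)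
  ultimately obtain k where k: "s = w + n * k" by (elim mod_eq_nat1E)
  show ?thesis
  proof (cases k)
    case (Suc k')
    have "w + k' * n \<in> S"
      using assms(1,2) apery_w_in(1)[OF assms(1,3)]
      by (simp add: w_def numerical_semigroup_add numerical_semigroup_mult)
    moreover have "s = (w + k' * n) + n" using k Suc by simp
    ultimately show ?thesis using s by (auto simp: apery_set_def)
  qed (use k in \<open>simp add: w_def\<close>)
qed

lemma apery_set_mod_eq_0:
  assumes "numerical_semigroup S" "n \<in> S" "0 < n" "s \<in> apery_set S n" "s mod n = 0"
  shows "s = 0"
proof -
  have "apery_w S n 0 \<le> 0" using numerical_semigroup_zero[OF assms(1)] by (rule apery_w_le) simp
  then show ?thesis using apery_w_mod_eq[OF assms(1-4)] assms(5) by simp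
qed

lemma apery_set_summand:
  assumes "numerical_semigroup S" "p + q \<in> apery_set S n" "p \<in> S" "q \<in> S"
  shows "p \<in> apery_set S n"
proof -
  have "p \<noteq> x + n" if "x \<in> S" for x
  proof
    assume "p = x + n"
    then have "p + q = (x + q) + n" by simp
    moreover have "x + q \<in> S" using numerical_semigroup_add[OF assms(1) that assms(4)] .
    ultimately show False using assms(2) by (auto simp: apery_set_def)
  qed
  then show ?thesis using assms(3) by (simp add: apery_set_def)
qed

lemma irreducible_in_apery_set:
  assumes "x \<in> irreducibles S" "n \<in> S" "n \<noteq> 0" "x \<noteq> n"
  shows "x \<in> apery_set S n"
  using assms by (fastforce simp: irreducibles_def apery_set_def)

lemma irreducible_less_multiple:
  assumes "numerical_semigroup S" "n \<in> S" "0 < n"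
    and x: "x \<in> irreducibles S" "x \<in> apery_set S n"
    and "s \<in> S" "2 \<le> k" "(k * s) mod n = x mod n"
  shows "x < k * s"
proof -
  have "x \<le> k * s"
    using apery_w_le[of "k * s" S n "x mod n"] apery_w_mod_eq[OF assms(1-3) x(2)]
      numerical_semigroup_mult[OF assms(1,6)] assms(8) by simp
  moreover have "x \<noteq> k * s"
  proof
    assume "x = k * s"
    then have "x = s + (k - 1) * s" using \<open>2 \<le> k\<close> by (simp add: mult_eq_if)
    moreover have "(k - 1) * s \<in> S" using numerical_semigroup_mult[OF assms(1,6)] .
    ultimately have "s = 0 \<or> (k - 1) * s = 0" using x(1) \<open>s \<in> S\<close> by (auto simp: irreducibles_def)
    then show False using \<open>x = k * s\<close> \<open>2 \<le> k\<close> x(1) by (auto simp: irreducibles_def)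
  qed
  ultimately show ?thesis by simp
qed

lemma mem_gen_three_below_third:
  assumes "s \<in> gen {m, u, v}" "s < v" "u mod m = 1"
  shows "(s mod m) * u \<le> s"
proof -
  obtain x y z where s: "s = x * m + y * u + z * v" using assms(1) by (auto simp: mem_gen_three)
  then have "z = 0" using assms(2) by (cases z) auto
  then have "s mod m = (y * (u mod m)) mod m" using s by (simp add: mod_simps)
  then have "s mod m \<le> y" using assms(3) by simp
  then show ?thesis using s by (metis add.commute le_add1 mult_le_mono1 order_trans)
qed

lemma MANS_apery_w_less:
  assumes "MANS S" "1 \<le> i" "i < j" "j < multiplicity S"
  shows "apery_w S (multiplicity S) i < apery_w S (multiplicity S) j"
  using assms unfolding MANS_def by simp

lemma MANS_apery_w_1_least:
  assumes ns: "numerical_semigroup S" and "MANS S"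
    and s: "s \<in> apery_set S (multiplicity S)" "s \<noteq> 0"
  shows "apery_w S (multiplicity S) 1 \<le> s"
proof -
  let ?m = "multiplicity S"
  have m: "?m \<in> S" "0 < ?m" using multiplicity_in_nonzero[OF ns] by simp_all
  have "s mod ?m \<noteq> 0" using apery_set_mod_eq_0[OF ns m s(1)] s(2) by blast
  then have "apery_w S ?m 1 \<le> apery_w S ?m (s mod ?m)"
    using MANS_apery_w_less[OF \<open>MANS S\<close>, of 1 "s mod ?m"] m(2)
    by (cases "s mod ?m = 1") simp_all
  also have "\<dots> = s" using apery_w_mod_eq[OF ns m s(1)] .
  finally show ?thesis .
qed

lemma MANS_apery_w_1_irreducible:
  assumes ns: "numerical_semigroup S" and "MANS S" and "2 \<le> multiplicity S"
  shows "apery_w S (multiplicity S) 1 \<in> irreducibles S"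
proof -
  let ?m = "multiplicity S" and ?w = "apery_w S (multiplicity S) 1"
  have m: "0 < ?m" using assms(3) by simp
  have w: "?w \<in> apery_set S ?m" "?w mod ?m = 1"
    using apery_w_in_apery_set[OF ns m] apery_w_in(2)[OF ns m, of 1] assms(3) by simp_all
  have "p = 0 \<or> q = 0" if pq: "p \<in> S" "q \<in> S" "?w = p + q" for p q
  proof (rule ccontr)
    assume "\<not> (p = 0 \<or> q = 0)"
    moreover have "p \<in> apery_set S ?m" using apery_set_summand[OF ns _ pq(1,2)] w(1) pq(3) by simp
    ultimately have "?w \<le> p" using MANS_apery_w_1_least[OF ns \<open>MANS S\<close>] by blast
    then show False using pq(3) \<open>\<not> (p = 0 \<or> q = 0)\<close> by simp
  qed
  moreover have "?w \<noteq> 0" using w(2) by (metis mod_0 zero_neq_one)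
  ultimately show ?thesis using w(1) by (auto simp: irreducibles_def apery_set_def)
qed

section \<open>Semigroups generated by a MANS triple\<close>

lemma div_mod_weight_le:
  fixes t u v m y z :: nat
  assumes "0 < t" "(t - 1) * u \<le> v" "v \<le> t * u" "(y + z * t) mod m = i"
  shows "(i div t) * v + (i mod t) * u \<le> y * u + z * v"
proof -
  define q r where "q = i div t" and "r = i mod t"
  have i: "i = q * t + r" and "r < t" using \<open>0 < t\<close> by (simp_all add: q_def r_def)
  show ?thesis
  proof (cases "y + z * t = i")
    case True
    then have "z * t < Suc q * t" using i \<open>r < t\<close> by simp
    then have "z \<le> q" by (simp only: mult_less_cancel2) simp
    then obtain d where q: "q = z + d" using le_Suc_ex by blast
    then have y: "y = d * t + r" using True i by (simp add: algebra_simps)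
    have "d * v \<le> d * (t * u)" using assms(3) by simp
    then show ?thesis unfolding q_def[symmetric] r_def[symmetric] q y by (simp add: algebra_simps)
  next
    case False
    \<comment> \<open>Now \<open>y + z t \<ge> i + m\<close>, and \<open>(t - 1) u \<le> v\<close> lets the surplus \<open>m v\<close> pay for the \<open>r\<close> copies of \<open>u\<close>.\<close>
    have "m \<noteq> 0" using False assms(4) by (metis mod_by_0)
    define k where "k = (y + z * t) div m"
    have c: "y + z * t = k * m + i" using assms(4) div_mult_mod_eq[of "y + z * t" m] by (simp add: k_def)
    then have "m \<le> k * m" using False by simp
    then have big: "i + m \<le> y + z * t" using c by linarith
    have "r \<le> t - 1" using \<open>r < t\<close> by simp
    also have "\<dots> \<le> m * (t - 1)" using \<open>m \<noteq> 0\<close> by simp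
    finally have "r * t \<le> (r + m) * (t - 1)" using \<open>0 < t\<close> by (cases t) (simp_all add: algebra_simps)
    then have "r * t * u \<le> (r + m) * ((t - 1) * u)" by (metis mult.assoc mult_le_mono1)
    also have "\<dots> \<le> (r + m) * v" using assms(2) by simp
    finally have "t * (q * v + r * u) \<le> (i + m) * v" unfolding i by (simp add: algebra_simps)
    also have "\<dots> \<le> (y + z * t) * v" using big by simp
    also have "\<dots> \<le> t * (y * u + z * v)" using mult_le_mono2[OF assms(3), of y] by (simp add: algebra_simps)
    finally show ?thesis unfolding q_def r_def using \<open>0 < t\<close> by simp
  qed
qed

lemma div_mod_weight_strict_mono:
  fixes t u v :: nat
  assumes "0 < u" "(t - 1) * u < v"
  shows "strict_mono (\<lambda>i. (i div t) * v + (i mod t) * u)"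
  unfolding strict_mono_Suc_iff
proof
  fix i
  show "(i div t) * v + (i mod t) * u < (Suc i div t) * v + (Suc i mod t) * u"
  proof (cases "Suc (i mod t) = t")
    case True
    then have "Suc i div t = Suc (i div t)" "Suc i mod t = 0" "i mod t = t - 1"
      by (simp_all add: div_Suc mod_Suc)
    then show ?thesis using assms(2) by simp
  next
    case False
    then have "Suc i div t = i div t" "Suc i mod t = Suc (i mod t)" by (simp_all add: div_Suc mod_Suc)
    then show ?thesis using assms(1) by simp
  qed
qed

text \<open>The generators \<open>a m + 1\<close> and \<open>b m + t\<close> of the theorem, described by their residues.\<close>
locale mans_triple =
  fixes m u v t :: nat
  assumes two_le_t: "2 \<le> t" and t_less_m: "t < m"
    and u_mod: "u mod m = 1" and v_mod: "v mod m = t"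
    and m_less_u: "m < u"
    and v_lower: "(t - 1) * u < v" and v_upper: "v < t * u"
begin

lemma u_less_v: "u < v"
proof -
  obtain s where "t = Suc (Suc s)" using two_le_t by (metis add_2_eq_Suc le_Suc_ex)
  then show ?thesis using v_lower by simp
qed

lemma mod_lincomb: "(x * m + y * u + z * v) mod m = (y + z * t) mod m"
proof -
  obtain a b where u: "u = a * m + 1" and v: "v = b * m + t"
    using div_mult_mod_eq[of u m] div_mult_mod_eq[of v m] u_mod v_mod by metis
  have "x * m + y * u + z * v = (y + z * t) + (x + y * a + z * b) * m"
    unfolding u v by (simp add: algebra_simps)
  then show ?thesis by simp
qed

lemma numerical_semigroup_gen: "numerical_semigroup (gen {m, u, v})"
proof -
  have "n \<in> gen {m, u, v}" if "(m - 1) * u \<le> n" for n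
  proof -
    have "n mod m < m" using t_less_m by simp
    then have "n mod m \<le> m - 1" by linarith
    then have "(n mod m) * u \<le> n" using that by (meson le_trans mult_le_mono1)
    moreover have "n mod m = ((n mod m) * u) mod m" using mod_lincomb[of 0 "n mod m" 0] by simp
    ultimately obtain k where "n = (n mod m) * u + m * k" by (elim mod_eq_nat1E)
    then have "n = k * m + (n mod m) * u + 0 * v" by (simp add: algebra_simps)
    then show ?thesis unfolding mem_gen_three by blast
  qed
  then have "UNIV - gen {m, u, v} \<subseteq> {..< (m - 1) * u}"
    by (meson Diff_iff lessThan_iff not_le subsetI)
  then show ?thesis
    unfolding numerical_semigroup_def using gen_zero gen_add_closed finite_subset by blast
qed

lemma multiplicity_gen: "multiplicity (gen {m, u, v}) = m"
proof (rule multiplicity_eqI)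
  show "m \<in> gen {m, u, v}" by (simp add: gen_base)
  show "m \<noteq> 0" using t_less_m by simp
  fix s assume "s \<in> gen {m, u, v}" "s \<noteq> 0"
  then obtain x y z where s: "s = x * m + y * u + z * v" "x \<noteq> 0 \<or> y \<noteq> 0 \<or> z \<noteq> 0"
    unfolding mem_gen_three by fastforce
  have "m \<le> x * m \<or> m \<le> y * u \<or> m \<le> z * v"
    using s(2) m_less_u u_less_v by (auto intro: order_trans[OF _ mult_le_mono1[of 1]])
  then show "m \<le> s" using s(1) by linarith
qed

lemma apery_w_gen:
  assumes "i < m"
  shows "apery_w (gen {m, u, v}) m i = (i div t) * v + (i mod t) * u"
  unfolding apery_w_def
proof (rule Least_equality)
  have "((i div t) * v + (i mod t) * u) mod m = (i mod t + (i div t) * t) mod m"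
    using mod_lincomb[of 0 "i mod t" "i div t"] by (simp add: add.commute)
  then have "((i div t) * v + (i mod t) * u) mod m = i mod m" by simp
  moreover have "(i div t) * v + (i mod t) * u = 0 * m + (i mod t) * u + (i div t) * v" by simp
  then have "(i div t) * v + (i mod t) * u \<in> gen {m, u, v}" unfolding mem_gen_three by blast
  ultimately show "(i div t) * v + (i mod t) * u \<in> gen {m, u, v} \<and>
      ((i div t) * v + (i mod t) * u) mod m = i mod m" by blast
next
  fix s assume s: "s \<in> gen {m, u, v} \<and> s mod m = i mod m"
  then obtain x y z where sx: "s = x * m + y * u + z * v" unfolding mem_gen_three by blast
  then have "(y + z * t) mod m = i" using s mod_lincomb assms by simp
  then have "(i div t) * v + (i mod t) * u \<le> y * u + z * v"
    using div_mod_weight_le two_le_t v_lower v_upper by simp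
  then show "(i div t) * v + (i mod t) * u \<le> s" using sx by simp
qed

lemma MANS_gen: "MANS (gen {m, u, v})"
  unfolding MANS_def multiplicity_gen
proof (intro allI impI)
  fix i j :: nat assume ij: "1 \<le> i \<and> i < j \<and> j \<le> m - 1"
  have mono: "strict_mono (\<lambda>i. (i div t) * v + (i mod t) * u)"
    using div_mod_weight_strict_mono m_less_u v_lower by simp
  have "(i div t) * v + (i mod t) * u < (j div t) * v + (j mod t) * u"
    using strict_monoD[OF mono, of i j] ij by simp
  moreover have "i < m" "j < m" using ij by linarith+
  ultimately show "apery_w (gen {m, u, v}) m i < apery_w (gen {m, u, v}) m j"
    by (simp add: apery_w_gen)
qed

lemma v_irreducible: "v \<in> irreducibles (gen {m, u, v})"
proof -
  have "\<forall>p\<in>gen {m, u, v}. \<forall>q\<in>gen {m, u, v}. v = p + q \<longrightarrow> p = 0 \<or> q = 0"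
  proof (intro ballI impI)
    fix p q assume p: "p \<in> gen {m, u, v}" and q: "q \<in> gen {m, u, v}" and v: "v = p + q"
    show "p = 0 \<or> q = 0"
    proof (rule ccontr)
      assume "\<not> (p = 0 \<or> q = 0)"
      then have "p < v" "q < v" using v by auto
      then have below: "(p mod m) * u \<le> p" "(q mod m) * u \<le> q"
        using mem_gen_three_below_third[OF p] mem_gen_three_below_third[OF q] u_mod by auto
      have "(p mod m + q mod m) mod m = t" using v_mod v by (simp add: mod_add_eq)
      then have "t \<le> p mod m + q mod m" by (metis mod_less_eq_dividend)
      then have "t * u \<le> (p mod m + q mod m) * u" by (rule mult_le_mono1)
      also have "\<dots> \<le> v" using below v by (simp add: add_mult_distrib)
      finally show False using v_upper by simp
    qed
  qed
  moreover have "v \<noteq> 0" using u_less_v by simp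
  moreover have "v \<in> gen {m, u, v}" by (simp add: gen_base)
  ultimately show ?thesis by (simp add: irreducibles_def)
qed

lemma irreducibles_gen: "irreducibles (gen {m, u, v}) = {m, u, v}"
proof
  show "irreducibles (gen {m, u, v}) \<subseteq> {m, u, v}" by (rule irreducibles_subset_generators) simp
next
  have "apery_w (gen {m, u, v}) m 1 = u" using apery_w_gen[of 1] two_le_t t_less_m by simp
  then have "u \<in> irreducibles (gen {m, u, v})"
    using MANS_apery_w_1_irreducible[OF numerical_semigroup_gen MANS_gen] two_le_t t_less_m
    by (simp add: multiplicity_gen)
  then show "{m, u, v} \<subseteq> irreducibles (gen {m, u, v})"
    using multiplicity_irreducible[OF numerical_semigroup_gen] v_irreducible
    by (simp add: multiplicity_gen)
qed

lemma embedding_dimension_gen: "embedding_dimension (gen {m, u, v}) = 3"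
  using numerical_semigroup_gen m_less_u u_less_v
  by (simp add: embedding_dimension_def msg_eq_irreducibles numerical_semigroup_def irreducibles_gen)

end

section \<open>MANS semigroups of embedding dimension three\<close>

lemma MANS_embedding_dimension_3_irreducibles:
  fixes S :: "nat set"
  defines "m \<equiv> multiplicity S" and "w \<equiv> apery_w S (multiplicity S)"
  assumes ns: "numerical_semigroup S" and MANS: "MANS S" and "embedding_dimension S = 3"
  obtains v where "irreducibles S = {m, w 1, v}" "w 1 < v" "v \<in> apery_set S m" "2 \<le> v mod m"
proof -
  have m: "m \<in> S" "0 < m" using multiplicity_in_nonzero[OF ns] by (simp_all add: m_def)
  have m_irr: "m \<in> irreducibles S" using multiplicity_irreducible[OF ns] by (simp add: m_def)
  have card: "card (irreducibles S) = 3"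
    using assms ns msg_eq_irreducibles by (simp add: embedding_dimension_def numerical_semigroup_def)
  have apery: "x \<in> apery_set S m" "x mod m \<noteq> 0" if "x \<in> irreducibles S" "x \<noteq> m" for x
  proof -
    show "x \<in> apery_set S m" using irreducible_in_apery_set[OF that(1) m(1) _ that(2)] m(2) by simp
    moreover have "x \<noteq> 0" using that(1) by (simp add: irreducibles_def)
    ultimately show "x mod m \<noteq> 0" using apery_set_mod_eq_0[OF ns m] by blast
  qed
  have "card (irreducibles S - {m}) = 2" using card m_irr by (simp add: card_Diff_singleton)
  then have "irreducibles S - {m} \<noteq> {}" by (metis card.empty zero_neq_numeral)
  then obtain x where "x \<in> irreducibles S" "x \<noteq> m" by blast
  then have "m \<noteq> 1" using apery(2) by fastforce
  then have m2: "2 \<le> m" using m(2) by linarith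
  have w1: "w 1 \<in> irreducibles S" "w 1 mod m = 1"
    using MANS_apery_w_1_irreducible[OF ns MANS] apery_w_in(2)[OF ns m(2)] m2
    by (simp_all add: m_def w_def)
  then have "w 1 \<noteq> m" by auto
  then have "card (irreducibles S - {m} - {w 1}) = 1" using card m_irr w1(1) by (simp add: card_Diff_singleton)
  then obtain v where v: "irreducibles S - {m} - {w 1} = {v}" by (rule card_1_singletonE)
  then have irr: "irreducibles S = {m, w 1, v}" using m_irr w1(1) by blast
  have "v \<in> irreducibles S" "v \<noteq> m" "v \<noteq> w 1" using v by blast+
  then have v_ap: "v \<in> apery_set S m" and "v mod m \<noteq> 0" using apery by blast+
  moreover have "v mod m \<noteq> 1"
    using apery_w_mod_eq[OF ns m v_ap] \<open>v \<noteq> w 1\<close> by (auto simp: w_def m_def)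
  ultimately have "2 \<le> v mod m" by linarith
  moreover have "w 1 < v"
    using MANS_apery_w_1_least[OF ns MANS, of v] v_ap \<open>v \<in> irreducibles S\<close> \<open>v \<noteq> w 1\<close>
    by (auto simp: m_def w_def irreducibles_def)
  ultimately show thesis using that irr v_ap by blast
qed

lemma MANS_embedding_dimension_3_mans_triple:
  assumes ns: "numerical_semigroup S" and MANS: "MANS S" and "embedding_dimension S = 3"
  obtains u v t where "S = gen {multiplicity S, u, v}" "mans_triple (multiplicity S) u v t"
proof -
  define m w where "m = multiplicity S" and "w = apery_w S m"
  obtain v where irr: "irreducibles S = {m, w 1, v}" and "w 1 < v"
    and v_ap: "v \<in> apery_set S m" and two_le_t: "2 \<le> v mod m"
    using MANS_embedding_dimension_3_irreducibles[OF assms] unfolding m_def w_def by blast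
  define u t where "u = w 1" and "t = v mod m"
  have m: "m \<in> S" "0 < m" using multiplicity_in_nonzero[OF ns] by (simp_all add: m_def)
  have S: "S = gen {m, u, v}"
    using gen_irreducibles[of S] ns irr by (simp add: numerical_semigroup_def u_def)
  have t_less_m: "t < m" using m(2) by (simp add: t_def)
  have u: "u \<in> S" "u mod m = 1"
    using apery_w_in[OF ns m(2), of 1] two_le_t t_less_m by (simp_all add: u_def w_def t_def)
  have "u \<noteq> 0" "u \<noteq> m" using u(2) by (metis mod_0 zero_neq_one, metis mod_self zero_neq_one)
  then have "m < u" using multiplicity_le[OF u(1)] by (simp add: m_def)
  have w_t: "w t = v" using apery_w_mod_eq[OF ns m v_ap] by (simp add: w_def t_def)
  have "v < t * u"
  proof (rule irreducible_less_multiple[OF ns m _ v_ap u(1)])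
    show "v \<in> irreducibles S" using irr by blast
    show "2 \<le> t" using two_le_t by (simp add: t_def)
    show "(t * u) mod m = v mod m" using u(2) t_less_m by (metis mod_mult_right_eq mult.right_neutral t_def mod_less)
  qed
  moreover have "(t - 1) * u < v"
  proof -
    have "w (t - 1) < w t"
      using MANS_apery_w_less[OF MANS, of "t - 1" t] two_le_t t_less_m by (simp add: w_def m_def t_def)
    moreover have "w (t - 1) \<in> gen {m, u, v}" "w (t - 1) mod m = t - 1"
      using apery_w_in[OF ns m(2), of "t - 1"] S t_less_m by (simp_all add: w_def)
    ultimately have "(t - 1) * u \<le> w (t - 1)"
      using mem_gen_three_below_third[of "w (t - 1)" m u v] w_t u(2) by simp
    then show ?thesis using \<open>w (t - 1) < w t\<close> w_t by simp
  qed
  ultimately have "mans_triple m u v t"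
    using two_le_t t_less_m u(2) \<open>m < u\<close> by unfold_locales (simp_all add: t_def)
  with S show thesis using that unfolding m_def by blast
qed

theorem theorem3p7:
  fixes S :: "nat set"
  assumes "numerical_semigroup S"
  shows "(MANS S \<and> embedding_dimension S = 3) \<longleftrightarrow>
    (\<exists>m a b t :: nat. S = gen {m, a * m + 1, b * m + t} \<and> m \<ge> 3 \<and> a \<ge> 1 \<and>
       2 \<le> t \<and> t \<le> m - 1 \<and>
       (t - 1) * (a * m + 1) < b * m + t \<and> b * m + t < t * (a * m + 1))"
    (is "?lhs \<longleftrightarrow> ?rhs")
proof
  assume ?lhs
  then obtain u v t where S: "S = gen {multiplicity S, u, v}" and triple: "mans_triple (multiplicity S) u v t"
    using MANS_embedding_dimension_3_mans_triple[OF assms] by blast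
  interpret mans_triple "multiplicity S" u v t by (fact triple)
  let ?m = "multiplicity S"
  have "(u div ?m) * ?m + 1 = u" "(v div ?m) * ?m + t = v"
    using div_mult_mod_eq[of u ?m] div_mult_mod_eq[of v ?m] u_mod v_mod by simp_all
  moreover have "0 < u div ?m" using m_less_u t_less_m by (simp add: div_greater_zero_iff)
  ultimately show ?rhs
    using S two_le_t t_less_m v_lower v_upper
    by (intro exI[of _ ?m] exI[of _ "u div ?m"] exI[of _ "v div ?m"] exI[of _ t]) simp
next
  assume ?rhs
  then obtain m a b t where S: "S = gen {m, a * m + 1, b * m + t}" and "1 \<le> a"
    and bounds: "3 \<le> m" "2 \<le> t" "t \<le> m - 1"
      "(t - 1) * (a * m + 1) < b * m + t" "b * m + t < t * (a * m + 1)"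
    by blast
  interpret mans_triple m "a * m + 1" "b * m + t" t
    using bounds \<open>1 \<le> a\<close> by unfold_locales (simp_all add: mod_Suc less_Suc_eq_le)
  show ?lhs using MANS_gen embedding_dimension_gen S by simp
qed

end
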